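(* Let $\tau$ be a type and let $\mathcal F$ be a $2$-capturing construction scheme over $\omega_1$ of type $\tau$. For $\alpha\in\omega_1$ let $f_\alpha:\omega\to\omega$ be $f_\alpha(l)=|(\alpha)_l|$, and let $\mathcal B_{\mathcal F}=\{f_\alpha\}_{\alpha\in\omega_1}$, ordered by $f\le g$ iff $f(n)\le g(n)$ for all $n$. Then $(\mathcal B_{\mathcal F},\le)$ is a sixth Tukey type, i.e. it is a directed partial order of cardinality $\omega_1$ which is not Tukey equivalent to any of $1$, $\omega$, $\omega_1$, $\omega\times\omega_1$, $[\omega_1]^{<\omega}$ (with their natural orders).
   Context: For directed partial orders $D,E$, $E\le_T D$ if there is $\phi:D\to E$ mapping cofinal subsets of $D$ to cofinal subsets of $E$; $E\equiv_T D$ if $E\le_T D$ and $D\le_T E$. A type is a sequence $\tau=\{(m_k,n_{k+1},r_{k+1})\}_{k\in\omega}$ of natural numbers with $m_0=1$; $n_k\ge2$ for $k\ge1$; every $r\in\omega$ equals $r_k$ for infinitely many $k$; $m_k>r_{k+1}$; and $m_{k+1}=r_{k+1}+(m_k-r_{k+1})n_{k+1}$ for all $k$. For a set of ordinals $X$ and $\mathcal F\subseteq[X]^{<\omega}$, $\mathcal F_k$ is the set of elements of rank $k$ in $(\mathcal F,\subsetneq)$; $A\sqsubseteq B$ means $A\subseteq B$ and every element of $B$ below an element of $A$ is in $A$; $A<B$ means every element of $A$ is below every element of $B$. $\mathcal F$ is a construction scheme over $X$ of type $\tau$ if (1) every finite subset of $X$ lies in a member of $\mathcal F$; (2) $|F|=m_k$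 for $F\in\mathcal F_k$; (3) $E\cap F\sqsubseteq E,F$ for $E,F\in\mathcal F_k$; (4) each $F\in\mathcal F_{k+1}$ is the union of uniquely determined $F_0,\dots,F_{n_{k+1}-1}\in\mathcal F_k$ forming a $\Delta$-system with root $R(F)$, $|R(F)|=r_{k+1}$, $R(F)<F_0\setminus R(F)<\dots<F_{n_{k+1}-1}\setminus R(F)$. Let $\rho(\alpha,\beta)=\min\{k:\exists F\in\mathcal F_k\,(\{\alpha,\beta\}\subseteq F)\}$ and $(\alpha)_k=\{\xi\le\alpha:\rho(\xi,\alpha)\le k\}$. For $l\ge1$, $F\in\mathcal F_l$ and finite $\mathcal C\subseteq[\omega_1]^{<\omega}$: $F$ captures $\mathcal C$ if $|\mathcal C|\le n_l$ and $\mathcal C$ can be enumerated as $\{c_i\}_{i<|\mathcal C|}$ with $c_i\subseteq F_i$, $c_i\setminus R(F)\neq\emptyset$ and $\phi_i[c_0]=c_i$ where $\phi_i:F_0\to F_i$ is the increasing bijection. $\mathcal F$ is $2$-capturing if for every uncountable $S\subseteq[\omega_1]^{<\omega}$ and every $k\in\omega$ there are $\mathcal C\in[S]^2$, $l>k$ and $F\in\mathcal F_l$ capturing $\mathcal C$. *)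

theory Defs
  imports "HOL-Library.Countable_Set"
begin

text \<open>A type tau = ((m k, n (k+1), r (k+1)))_k, given by three sequences; n and r are
  only meaningful from index 1 on.\<close>
definition is_type :: "(nat \<Rightarrow> nat) \<Rightarrow> (nat \<Rightarrow> nat) \<Rightarrow> (nat \<Rightarrow> nat) \<Rightarrow> bool" where
  "is_type m n r \<longleftrightarrow>
     m 0 = 1 \<and>
     (\<forall>k\<ge>1. n k \<ge> 2) \<and>
     (\<forall>q. infinite {k. k \<ge> 1 \<and> r k = q}) \<and>
     (\<forall>k. m k > r (Suc k)) \<and>
     (\<forall>k. m (Suc k) = r (Suc k) + (m k - r (Suc k)) * n (Suc k))"

definition rank_chain :: "'a set set \<Rightarrow> 'a set list \<Rightarrow> bool" where
  "rank_chain \<F> cs \<longleftrightarrow> set cs \<subseteq> \<F> \<and> sorted_wrt (\<subset>) cs"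

text \<open>level F k = elements of rank k: the longest strictly increasing chain in F ending at
  the element has exactly k+1 members.\<close>
definition level :: "'a set set \<Rightarrow> nat \<Rightarrow> 'a set set" where
  "level \<F> k = {F \<in> \<F>.
      (\<exists>cs. rank_chain \<F> cs \<and> cs \<noteq> [] \<and> last cs = F \<and> length cs = Suc k) \<and>
      (\<forall>cs. rank_chain \<F> cs \<and> cs \<noteq> [] \<and> last cs = F \<longrightarrow> length cs \<le> Suc k)}"

definition initial_seg :: "'a::linorder set \<Rightarrow> 'a set \<Rightarrow> bool" where
  "initial_seg A B \<longleftrightarrow> A \<subseteq> B \<and> (\<forall>b\<in>B. \<forall>a\<in>A. b < a \<longrightarrow> b \<in> A)"

definition set_less :: "'a::linorder set \<Rightarrow> 'a set \<Rightarrow> bool" where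
  "set_less A B \<longleftrightarrow> (\<forall>a\<in>A. \<forall>b\<in>B. a < b)"

text \<open>F (of rank k+1) is the union of Fs 0, ..., Fs (n(k+1)-1) of rank k, a Delta-system
  with root R as in clause (4). Fs is set to empty beyond n(k+1) to make it unique.\<close>
definition decomp :: "'a::linorder set set \<Rightarrow> (nat \<Rightarrow> nat) \<Rightarrow> (nat \<Rightarrow> nat) \<Rightarrow> nat
    \<Rightarrow> 'a set \<Rightarrow> (nat \<Rightarrow> 'a set) \<Rightarrow> 'a set \<Rightarrow> bool" where
  "decomp \<F> n r k F Fs R \<longleftrightarrow>
     (\<forall>i<n (Suc k). Fs i \<in> level \<F> k) \<and>
     (\<forall>i\<ge>n (Suc k). Fs i = {}) \<and>
     F = (\<Union>i<n (Suc k). Fs i) \<and>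
     (\<forall>i<n (Suc k). \<forall>j<n (Suc k). i \<noteq> j \<longrightarrow> Fs i \<inter> Fs j = R) \<and>
     card R = r (Suc k) \<and>
     set_less R (Fs 0 - R) \<and>
     (\<forall>i. Suc i < n (Suc k) \<longrightarrow> set_less (Fs i - R) (Fs (Suc i) - R))"

section \<open>Construction schemes (over the whole type, which plays the role of X)\<close>

definition construction_scheme :: "'a::linorder set set \<Rightarrow> (nat \<Rightarrow> nat) \<Rightarrow> (nat \<Rightarrow> nat)
    \<Rightarrow> (nat \<Rightarrow> nat) \<Rightarrow> bool" where
  "construction_scheme \<F> m n r \<longleftrightarrow>
     (\<forall>F\<in>\<F>. finite F) \<and>
     (\<forall>A. finite A \<longrightarrow> (\<exists>F\<in>\<F>. A \<subseteq> F)) \<and>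
     (\<forall>k. \<forall>F\<in>level \<F> k. card F = m k) \<and>
     (\<forall>k. \<forall>E\<in>level \<F> k. \<forall>F\<in>level \<F> k. initial_seg (E \<inter> F) E \<and> initial_seg (E \<inter> F) F) \<and>
     (\<forall>k. \<forall>F\<in>level \<F> (Suc k). \<exists>!Fs. \<exists>R. decomp \<F> n r k F Fs R)"

definition incr_bij :: "'a::linorder set \<Rightarrow> 'a set \<Rightarrow> ('a \<Rightarrow> 'a) \<Rightarrow> bool" where
  "incr_bij A B f \<longleftrightarrow> bij_betw f A B \<and> strict_mono_on A f"

definition captures :: "'a::linorder set set \<Rightarrow> (nat \<Rightarrow> nat) \<Rightarrow> (nat \<Rightarrow> nat) \<Rightarrow> nat
    \<Rightarrow> 'a set \<Rightarrow> 'a set set \<Rightarrow> bool" where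
  "captures \<F> n r l F \<C> \<longleftrightarrow>
     l \<ge> 1 \<and> F \<in> level \<F> l \<and> finite \<C> \<and> card \<C> \<le> n l \<and>
     (\<exists>Fs R c. decomp \<F> n r (l - 1) F Fs R \<and>
        \<C> = c ` {..<card \<C>} \<and> inj_on c {..<card \<C>} \<and>
        (\<forall>i<card \<C>. c i \<subseteq> Fs i \<and> c i - R \<noteq> {} \<and>
            (\<exists>\<phi>. incr_bij (Fs 0) (Fs i) \<phi> \<and> \<phi> ` c 0 = c i)))"

definition two_capturing :: "'a::linorder set set \<Rightarrow> (nat \<Rightarrow> nat) \<Rightarrow> (nat \<Rightarrow> nat) \<Rightarrow> bool" where
  "two_capturing \<F> n r \<longleftrightarrow>
     (\<forall>S. S \<subseteq> {A. finite A} \<and> uncountable S \<longrightarrow>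
        (\<forall>k. \<exists>\<C>. \<C> \<subseteq> S \<and> card \<C> = 2 \<and>
              (\<exists>l>k. \<exists>F\<in>level \<F> l. captures \<F> n r l F \<C>)))"

definition rho :: "'a set set \<Rightarrow> 'a \<Rightarrow> 'a \<Rightarrow> nat" where
  "rho \<F> \<alpha> \<beta> = (LEAST k. \<exists>F\<in>level \<F> k. {\<alpha>, \<beta>} \<subseteq> F)"

definition cone :: "'a::linorder set set \<Rightarrow> 'a \<Rightarrow> nat \<Rightarrow> 'a set" where
  "cone \<F> \<alpha> k = {\<xi>. \<xi> \<le> \<alpha> \<and> rho \<F> \<xi> \<alpha> \<le> k}"

definition fseq :: "'a::linorder set set \<Rightarrow> 'a \<Rightarrow> nat \<Rightarrow> nat" where
  "fseq \<F> \<alpha> = (\<lambda>l. card (cone \<F> \<alpha> l))"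

definition directed_po :: "'d set \<Rightarrow> ('d \<Rightarrow> 'd \<Rightarrow> bool) \<Rightarrow> bool" where
  "directed_po D le \<longleftrightarrow>
     (\<forall>x\<in>D. le x x) \<and>
     (\<forall>x\<in>D. \<forall>y\<in>D. le x y \<and> le y x \<longrightarrow> x = y) \<and>
     (\<forall>x\<in>D. \<forall>y\<in>D. \<forall>z\<in>D. le x y \<and> le y z \<longrightarrow> le x z) \<and>
     (\<forall>x\<in>D. \<forall>y\<in>D. \<exists>z\<in>D. le x z \<and> le y z)"

definition cofinal_in :: "'d set \<Rightarrow> ('d \<Rightarrow> 'd \<Rightarrow> bool) \<Rightarrow> 'd set \<Rightarrow> bool" where
  "cofinal_in D le C \<longleftrightarrow> C \<subseteq> D \<and> (\<forall>d\<in>D. \<exists>c\<in>C. le d c)"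

text \<open>tukey_le E leE D leD: E \<le>_T D, i.e. some map D \<rightarrow> E sends cofinal subsets of D
  to cofinal subsets of E.\<close>
definition tukey_le :: "'e set \<Rightarrow> ('e \<Rightarrow> 'e \<Rightarrow> bool) \<Rightarrow> 'd set \<Rightarrow> ('d \<Rightarrow> 'd \<Rightarrow> bool) \<Rightarrow> bool" where
  "tukey_le E leE D leD \<longleftrightarrow>
     (\<exists>\<phi>. \<phi> ` D \<subseteq> E \<and> (\<forall>C. cofinal_in D leD C \<longrightarrow> cofinal_in E leE (\<phi> ` C)))"

definition tukey_eq :: "'d set \<Rightarrow> ('d \<Rightarrow> 'd \<Rightarrow> bool) \<Rightarrow> 'e set \<Rightarrow> ('e \<Rightarrow> 'e \<Rightarrow> bool) \<Rightarrow> bool" where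
  "tukey_eq D leD E leE \<longleftrightarrow> tukey_le E leE D leD \<and> tukey_le D leD E leE"

definition prod_le :: "('a::order \<times> 'b::order) \<Rightarrow> ('a \<times> 'b) \<Rightarrow> bool" where
  "prod_le p q \<longleftrightarrow> fst p \<le> fst q \<and> snd p \<le> snd q"

end

(* Write B for the set of the functions f_alpha.  Since f_alpha(l) is the position of alpha in
   any level-l set containing it, f_alpha <= f_beta forces alpha <= beta; so alpha |-> f_alpha is
   injective and every element of B has only countably many predecessors.  B is directed because
   the maximum of a level-k set dominates all its members.  As f_alpha(l) <= m_l, every uncountable
   subset of B has a countable subset with the same upper bounds (a maximiser in each coordinate),
   hence a countable subset unbounded in B; a Tukey map from omega x omega_1 would bound such a
   set, so B is not Tukey below omega x omega_1, nor below 1, omega or omega_1.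
   A Tukey map from [omega_1]^<omega would give an uncountable Gamma all of whose lower sets
   {gamma in Gamma. f_gamma <= f_delta} are finite.  2-capturing captures two of them in blocks
   F_0, F_1 of some F, and the increasing bijection F_0 -> F_1 sends the top gamma of the first
   to the top delta of the second.  The values of f are invariant under such bijections on the
   levels below F and increasing inside F from its level on, so f_gamma <= f_delta.  Hence gamma
   lies in both blocks, i.e. in the root, although the first lower set is not contained in it. *)

theory Submission
  imports Defs
begin

section \<open>Tukey maps and countable sets\<close>

lemma tukey_le_trans:
  assumes "tukey_le E leE D leD" "tukey_le D leD X leX"
  shows "tukey_le E leE X leX"
proof -
  obtain \<phi> where \<phi>: "\<phi> ` D \<subseteq> E" "\<And>C. cofinal_in D leD C \<Longrightarrow> cofinal_in E leE (\<phi> ` C)"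
    using assms(1) unfolding tukey_le_def by blast
  obtain \<psi> where \<psi>: "\<psi> ` X \<subseteq> D" "\<And>C. cofinal_in X leX C \<Longrightarrow> cofinal_in D leD (\<psi> ` C)"
    using assms(2) unfolding tukey_le_def by blast
  have "(\<phi> \<circ> \<psi>) ` X \<subseteq> E" using \<phi>(1) \<psi>(1) by auto
  moreover have "cofinal_in E leE ((\<phi> \<circ> \<psi>) ` C)" if "cofinal_in X leX C" for C
    using \<phi>(2)[OF \<psi>(2)[OF that]] by (simp add: image_comp)
  ultimately show ?thesis unfolding tukey_le_def by blast
qed

lemma tukey_le_singleton:
  assumes "D \<noteq> {}"
  shows "tukey_le {x} (=) D leD"
  unfolding tukey_le_def cofinal_in_def
  by (rule exI[of _ "\<lambda>_. x"]) (use assms in auto)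

lemma tukey_le_fst_prod:
  "tukey_le (UNIV :: 'a::order set) (\<le>) (UNIV :: ('a \<times> 'b::order) set) prod_le"
  unfolding tukey_le_def cofinal_in_def prod_le_def
  by (rule exI[of _ fst]) fastforce

lemma tukey_le_snd_prod:
  "tukey_le (UNIV :: 'b::order set) (\<le>) (UNIV :: ('a::order \<times> 'b) set) prod_le"
  unfolding tukey_le_def cofinal_in_def prod_le_def
  by (rule exI[of _ snd]) fastforce

lemma cofinal_map_eventually_above:
  assumes "\<And>C. cofinal_in D leD C \<Longrightarrow> cofinal_in E leE (\<phi> ` C)" "e \<in> E"
  shows "\<exists>d\<in>D. \<forall>c\<in>D. leD d c \<longrightarrow> leE e (\<phi> c)"
proof (rule ccontr)
  assume "\<not> ?thesis"
  then have "cofinal_in D leD {c\<in>D. \<not> leE e (\<phi> c)}" unfolding cofinal_in_def by blast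
  then show False using assms unfolding cofinal_in_def by blast
qed

lemma not_tukey_le_nat_prod:
  fixes E :: "'e set" and le :: "'e \<Rightarrow> 'e \<Rightarrow> bool"
  assumes bounded: "\<And>Q :: 'a::order set. countable Q \<Longrightarrow> \<exists>b. \<forall>q\<in>Q. q \<le> b"
    and uncountable: "uncountable E"
    and unbounded: "\<And>S. S \<subseteq> E \<Longrightarrow> uncountable S \<Longrightarrow> \<exists>Q\<subseteq>S. countable Q \<and> (\<forall>b\<in>E. \<exists>q\<in>Q. \<not> le q b)"
  shows "\<not> tukey_le E le (UNIV :: (nat \<times> 'a) set) prod_le"
proof
  assume "tukey_le E le (UNIV :: (nat \<times> 'a) set) prod_le"
  then obtain \<phi> :: "nat \<times> 'a \<Rightarrow> 'e" where
    \<phi>: "range \<phi> \<subseteq> E" "\<And>C. cofinal_in UNIV prod_le C \<Longrightarrow> cofinal_in E le (\<phi> ` C)"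
    unfolding tukey_le_def by blast
  have "\<forall>x\<in>E. \<exists>d. \<forall>c. prod_le d c \<longrightarrow> le x (\<phi> c)"
    using cofinal_map_eventually_above[OF \<phi>(2)] by blast
  then obtain e where e: "\<forall>x\<in>E. \<forall>c. prod_le (e x) c \<longrightarrow> le x (\<phi> c)"
    by (rule bchoice[THEN exE])
  obtain N where N: "uncountable {x\<in>E. fst (e x) = N}"
  proof (rule ccontr)
    assume "\<not> thesis"
    then have "countable (\<Union>N. {x\<in>E. fst (e x) = N})" using that by blast
    moreover have "E = (\<Union>N. {x\<in>E. fst (e x) = N})" by auto
    ultimately show False using uncountable by simp
  qed
  have "{x\<in>E. fst (e x) = N} \<subseteq> E" by blast
  then obtain Q where Q: "Q \<subseteq> {x\<in>E. fst (e x) = N}" "countable Q" "\<forall>b\<in>E. \<exists>q\<in>Q. \<not> le q b"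
    using unbounded[OF _ N] by blast
  have "countable (snd ` e ` Q)" using Q(2) by simp
  from bounded[OF this] obtain b where "\<forall>q\<in>Q. snd (e q) \<le> b" by auto
  then have "le q (\<phi> (N, b))" if "q \<in> Q" for q
    using e[rule_format, of q "(N, b)"] Q(1) that unfolding prod_le_def by auto
  then show False using Q(3) \<phi>(1) by blast
qed

lemma tukey_le_finite_subsets_locally_finite:
  fixes E :: "'e set" and le :: "'e \<Rightarrow> 'e \<Rightarrow> bool"
  assumes "uncountable (UNIV :: 'a set)" "tukey_le {A :: 'a set. finite A} (\<subseteq>) E le"
    and refl: "\<And>x. x \<in> E \<Longrightarrow> le x x"
  shows "\<exists>\<Gamma>\<subseteq>E. uncountable \<Gamma> \<and> (\<forall>\<delta>\<in>\<Gamma>. finite {\<gamma>\<in>\<Gamma>. le \<gamma> \<delta>})"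
proof -
  obtain \<psi> :: "'e \<Rightarrow> 'a set" where \<psi>: "\<psi> ` E \<subseteq> {A. finite A}"
    "\<And>C. cofinal_in E le C \<Longrightarrow> cofinal_in {A. finite A} (\<subseteq>) (\<psi> ` C)"
    using assms(2) unfolding tukey_le_def by blast
  have "\<exists>x\<in>E. \<forall>b\<in>E. le x b \<longrightarrow> {\<alpha>} \<subseteq> \<psi> b" for \<alpha> :: 'a
    using cofinal_map_eventually_above[OF \<psi>(2), where e = "{\<alpha>}"] by simp
  then have "\<forall>\<alpha>::'a. \<exists>x. x \<in> E \<and> (\<forall>b\<in>E. le x b \<longrightarrow> \<alpha> \<in> \<psi> b)" by blast
  then obtain h where "\<forall>\<alpha>. h \<alpha> \<in> E \<and> (\<forall>b\<in>E. le (h \<alpha>) b \<longrightarrow> \<alpha> \<in> \<psi> b)"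
    by (rule choice[THEN exE])
  then have h: "\<And>\<alpha>. h \<alpha> \<in> E" "\<And>\<alpha> b. b \<in> E \<Longrightarrow> le (h \<alpha>) b \<Longrightarrow> \<alpha> \<in> \<psi> b"
    by blast+
  have finite: "finite {\<alpha>. le (h \<alpha>) b}" if "b \<in> E" for b
    using \<psi>(1) that h(2) by (auto intro: finite_subset[of _ "\<psi> b"])
  have "countable {\<alpha>. h \<alpha> = \<gamma>}" if "\<gamma> \<in> range h" for \<gamma>
  proof -
    have "\<gamma> \<in> E" using that h(1) by auto
    moreover have "{\<alpha>. h \<alpha> = \<gamma>} \<subseteq> {\<alpha>. le (h \<alpha>) \<gamma>}" using refl h(1) by auto
    ultimately show ?thesis using finite by (meson countable_finite finite_subset)
  qed
  moreover have "UNIV = (\<Union>\<gamma>\<in>range h. {\<alpha>. h \<alpha> = \<gamma>})" by auto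
  ultimately have "uncountable (range h)"
    using assms(1) countable_UN[of "range h" "\<lambda>\<gamma>. {\<alpha>. h \<alpha> = \<gamma>}"] by auto
  moreover have "finite {\<gamma>\<in>range h. le \<gamma> \<delta>}" if "\<delta> \<in> range h" for \<delta>
  proof -
    have "\<delta> \<in> E" using that h(1) by auto
    moreover have "{\<gamma>\<in>range h. le \<gamma> \<delta>} \<subseteq> h ` {\<alpha>. le (h \<alpha>) \<delta>}" by auto
    ultimately show ?thesis using finite by (meson finite_imageI finite_subset)
  qed
  moreover have "range h \<subseteq> E" using h(1) by auto
  ultimately show ?thesis by (intro exI[of _ "range h"]) blast
qed

lemma countable_subset_same_upper_bounds:
  fixes S :: "('i::countable \<Rightarrow> 'b::linorder) set"
  assumes "S \<noteq> {}" "\<And>j. finite ((\<lambda>f. f j) ` S)"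
  shows "\<exists>Q\<subseteq>S. countable Q \<and> (\<forall>b. (\<forall>q\<in>Q. q \<le> b) \<longrightarrow> (\<forall>f\<in>S. f \<le> b))"
proof -
  have "\<exists>g\<in>S. g j = Max ((\<lambda>f. f j) ` S)" for j
  proof -
    have "Max ((\<lambda>f. f j) ` S) \<in> (\<lambda>f. f j) ` S" using Max_in[OF assms(2)] assms(1) by blast
    then show ?thesis by auto
  qed
  then obtain a where a: "\<And>j. a j \<in> S" "\<And>j. a j j = Max ((\<lambda>f. f j) ` S)" by metis
  have "f \<le> b" if "\<forall>q\<in>range a. q \<le> b" "f \<in> S" for f b
  proof (rule le_funI)
    fix j
    have "f j \<le> a j j" using a(2) assms(2) that(2) by simp
    also have "\<dots> \<le> b j" using that(1) by (simp add: le_fun_def)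
    finally show "f j \<le> b j" .
  qed
  then show ?thesis using a(1) by (intro exI[of _ "range a"]) auto
qed

lemma countable_bounded:
  fixes Q :: "'a::linorder set"
  assumes "uncountable (UNIV :: 'a set)" "\<And>x::'a. countable {y. y < x}" "countable Q"
  shows "\<exists>b. \<forall>q\<in>Q. q \<le> b"
proof -
  have "countable (\<Union>q\<in>Q. {y. y < q} \<union> {q})" using assms(2,3) by blast
  then have "(\<Union>q\<in>Q. {y. y < q} \<union> {q}) \<noteq> UNIV" using assms(1) by auto
  then obtain b where "b \<notin> (\<Union>q\<in>Q. {y. y < q} \<union> {q})" by blast
  then show ?thesis by (auto simp: not_less)
qed

section \<open>Ranks, positions and increasing bijections\<close>

lemma rank_chain_length_le:
  assumes "rank_chain \<F> cs" "cs \<noteq> []" "last cs = F" "finite F"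
  shows "length cs \<le> Suc (card F)"
proof -
  have sorted: "sorted_wrt (\<subset>) cs" using assms(1) unfolding rank_chain_def by simp
  have split: "cs = butlast cs @ [F]" using assms(2,3) by (metis append_butlast_last_id)
  have below_last: "c \<subseteq> F" if "c \<in> set cs" for c
  proof -
    have "sorted_wrt (\<subset>) (butlast cs @ [F])" using sorted split by metis
    moreover have "c \<in> set (butlast cs @ [F])" using that split by metis
    ultimately show ?thesis by (auto simp: sorted_wrt_append)
  qed
  have "sorted_wrt (<) (map card cs)"
    unfolding sorted_wrt_map
    by (rule sorted_wrt_mono_rel[OF _ sorted])
      (meson assms(4) below_last finite_subset psubset_card_mono)
  then have "distinct (map card cs)" by (simp add: strict_sorted_iff)
  moreover have "set (map card cs) \<subseteq> {..card F}"
    using below_last assms(4) by (auto intro: card_mono)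
  ultimately show ?thesis
    by (metis card_atMost card_mono distinct_card finite_atMost length_map)
qed

lemma level_exists:
  assumes "F \<in> \<F>" "finite F"
  shows "\<exists>k. F \<in> level \<F> k"
proof -
  let ?L = "{length cs | cs. rank_chain \<F> cs \<and> cs \<noteq> [] \<and> last cs = F}"
  have one: "1 \<in> ?L" using assms(1) by (auto simp: rank_chain_def intro!: exI[of _ "[F]"])
  have fin: "finite ?L"
    using rank_chain_length_le[OF _ _ _ assms(2)]
    by (auto intro: finite_subset[of _ "{..Suc (card F)}"])
  have max: "Max ?L \<in> ?L" using Max_in[OF fin] one by blast
  have ge: "l \<le> Max ?L" if "l \<in> ?L" for l using fin that by simp
  then have pos: "1 \<le> Max ?L" using one by blast
  have "F \<in> level \<F> (Max ?L - 1)"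
    unfolding level_def
  proof (intro CollectI conjI allI impI)
    show "\<exists>cs. rank_chain \<F> cs \<and> cs \<noteq> [] \<and> last cs = F \<and> length cs = Suc (Max ?L - 1)"
      using max pos by auto
    fix cs assume "rank_chain \<F> cs \<and> cs \<noteq> [] \<and> last cs = F"
    then have "length cs \<in> ?L" by blast
    then show "length cs \<le> Suc (Max ?L - 1)" using ge pos by fastforce
  qed fact
  then show ?thesis by blast
qed

definition position :: "'a::linorder set \<Rightarrow> 'a \<Rightarrow> nat" where
  "position A x = card (A \<inter> {..x})"

lemma position_mono: "finite A \<Longrightarrow> x \<le> y \<Longrightarrow> position A x \<le> position A y"
  unfolding position_def by (rule card_mono) auto

lemma position_strict_mono: "finite A \<Longrightarrow> y \<in> A \<Longrightarrow> x < y \<Longrightarrow> position A x < position A y"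
  unfolding position_def by (rule psubset_card_mono) (auto, metis Int_iff atMost_iff order_refl leD)

lemma position_le_card: "finite A \<Longrightarrow> position A x \<le> card A"
  unfolding position_def by (rule card_mono) auto

lemma incr_bij_image_lower:
  assumes "incr_bij A B \<phi>" "x \<in> A"
  shows "\<phi> ` (A \<inter> {..x}) = B \<inter> {..\<phi> x}"
proof -
  have bij: "bij_betw \<phi> A B" and mono: "strict_mono_on A \<phi>"
    using assms(1) unfolding incr_bij_def by auto
  have "z \<le> x \<longleftrightarrow> \<phi> z \<le> \<phi> x" if "z \<in> A" for z
    using strict_mono_on_leD[OF mono] strict_mono_on_less[OF mono] that assms(2)
    by (metis not_le)
  then show ?thesis using bij unfolding bij_betw_def by auto
qed

lemma incr_bij_position:
  assumes "incr_bij A B \<phi>" "x \<in> A"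
  shows "position B (\<phi> x) = position A x"
proof -
  have "inj_on \<phi> (A \<inter> {..x})"
    using assms(1) unfolding incr_bij_def bij_betw_def by (auto intro: inj_on_subset)
  then show ?thesis
    unfolding position_def incr_bij_image_lower[OF assms, symmetric] by (rule card_image)
qed

lemma incr_bij_Max:
  assumes "incr_bij A B \<phi>" "c \<subseteq> A" "finite c" "c \<noteq> {}"
  shows "\<phi> (Max c) = Max (\<phi> ` c)"
proof (rule Max_eqI[symmetric])
  have mono: "strict_mono_on A \<phi>" using assms(1) unfolding incr_bij_def by simp
  show "y \<le> \<phi> (Max c)" if y: "y \<in> \<phi> ` c" for y
  proof -
    obtain z where "z \<in> c" "y = \<phi> z" using y by blast
    moreover have "Max c \<in> A" using Max_in[OF assms(3,4)] assms(2) by blast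
    ultimately show ?thesis using assms(2,3) strict_mono_on_leD[OF mono] by auto
  qed
qed (use assms in auto)

section \<open>Ordered \<Delta>-systems\<close>

lemma set_less_trans:
  "set_less A B \<Longrightarrow> set_less B C \<Longrightarrow> B \<noteq> {} \<Longrightarrow> set_less A C"
  unfolding set_less_def by (meson ex_in_conv order.strict_trans)

locale ordered_delta_system =
  fixes Fs :: "nat \<Rightarrow> 'a::linorder set" and N M s :: nat and R E :: "'a set"
  assumes finite_block: "\<And>i. i < N \<Longrightarrow> finite (Fs i)"
    and card_block: "\<And>i. i < N \<Longrightarrow> card (Fs i) = M"
    and card_root: "card R = s" and card_root_less: "s < M"
    and block_inter: "\<And>i j. i < N \<Longrightarrow> j < N \<Longrightarrow> i \<noteq> j \<Longrightarrow> Fs i \<inter> Fs j = R"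
    and two_le_N: "2 \<le> N"
    and root_less_first: "set_less R (Fs 0 - R)"
    and block_less_Suc: "\<And>i. Suc i < N \<Longrightarrow> set_less (Fs i - R) (Fs (Suc i) - R)"
    and union_blocks: "E = (\<Union>i<N. Fs i)"
begin

lemma root_subset:
  assumes "i < N"
  shows "R \<subseteq> Fs i"
proof -
  define j :: nat where "j = (if i = 0 then 1 else 0)"
  have "j < N" "i \<noteq> j" using two_le_N unfolding j_def by auto
  then show ?thesis using block_inter[OF assms] by blast
qed

lemma finite_root: "finite R"
  using root_subset[of 0] finite_block[of 0] two_le_N finite_subset by auto

lemma card_block_diff_root: "i < N \<Longrightarrow> card (Fs i - R) = M - s"
  using root_subset card_block card_root finite_root by (simp add: card_Diff_subset)

lemma block_diff_root_nonempty: "i < N \<Longrightarrow> Fs i - R \<noteq> {}"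
  using card_block_diff_root card_root_less by (metis card.empty diff_is_0_eq not_le)

lemma block_less: "a < b \<Longrightarrow> b < N \<Longrightarrow> set_less (Fs a - R) (Fs b - R)"
proof (induction b)
  case (Suc b)
  show ?case
  proof (cases "a = b")
    case False
    then have "set_less (Fs a - R) (Fs b - R)" using Suc by simp
    then show ?thesis
      using Suc.prems by (meson Suc_lessD set_less_trans block_less_Suc block_diff_root_nonempty)
  qed (use Suc.prems block_less_Suc in simp)
qed simp

lemma root_less_block: "i < N \<Longrightarrow> set_less R (Fs i - R)"
  using root_less_first set_less_trans[OF root_less_first block_less[of 0 i]]
    block_diff_root_nonempty[of 0] two_le_N by (cases "i = 0") auto

lemma lower_root: "y \<in> R \<Longrightarrow> E \<inter> {..y} \<subseteq> R"
  using root_less_block union_blocks unfolding set_less_def by (fastforce simp: not_le[symmetric])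

lemma lower_block:
  assumes i: "i < N" and y: "y \<in> Fs i - R"
  shows "E \<inter> {..y} = R \<union> (\<Union>a<i. Fs a - R) \<union> ((Fs i - R) \<inter> {..y})"
proof (intro equalityI subsetI)
  fix z assume "z \<in> E \<inter> {..y}"
  then obtain a where a: "a < N" "z \<in> Fs a" "z \<le> y" using union_blocks by auto
  have "\<not> i < a \<or> z \<in> R"
    using block_less[of i a] a y unfolding set_less_def by (meson Diff_iff leD)
  then show "z \<in> R \<union> (\<Union>a<i. Fs a - R) \<union> ((Fs i - R) \<inter> {..y})"
    using a by (cases "a < i") auto
next
  fix z assume z: "z \<in> R \<union> (\<Union>a<i. Fs a - R) \<union> ((Fs i - R) \<inter> {..y})"
  then have "z \<in> E" using i root_subset union_blocks by auto
  moreover have "z \<le> y"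
    using z y root_less_block[OF i] block_less[OF _ i] unfolding set_less_def
    by (fastforce intro: less_imp_le)
  ultimately show "z \<in> E \<inter> {..y}" by simp
qed

lemma position_block:
  assumes i: "i < N" and y: "y \<in> Fs i - R"
  shows "s + i * (M - s) < position E y \<and> position E y \<le> s + Suc i * (M - s)"
proof -
  define U where "U = (\<Union>a<i. Fs a - R)"
  define V where "V = (Fs i - R) \<inter> {..y}"
  have disjoint_blocks: "(Fs a - R) \<inter> (Fs b - R) = {}" if "a < N" "b < N" "a \<noteq> b" for a b
    using block_inter[OF that] by blast
  have finite: "finite U" "finite V" unfolding U_def V_def using finite_block i by auto
  have "card U = (\<Sum>a<i. card (Fs a - R))"
    unfolding U_def using i finite_block disjoint_blocks by (intro card_UN_disjoint) auto
  also have "\<dots> = i * (M - s)" using i card_block_diff_root by simp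
  finally have card_U: "card U = i * (M - s)" .
  have "y \<in> V" using y unfolding V_def by simp
  then have "1 \<le> card V" using finite(2) by (auto simp: Suc_le_eq card_gt_0_iff)
  moreover have "card V \<le> M - s"
    unfolding V_def using i finite_block card_block_diff_root
    by (metis Int_lower1 card_mono finite_Diff)
  moreover have "(Fs a - R) \<inter> (Fs i - R) = {}" if "a < i" for a
    using disjoint_blocks[of a i] that i by simp
  then have "R \<inter> U = {}" "(R \<union> U) \<inter> V = {}"
    unfolding U_def V_def by blast+
  then have "position E y = s + card U + card V"
    unfolding position_def lower_block[OF i y] U_def[symmetric] V_def[symmetric]
    using finite finite_root card_root by (simp add: card_Un_disjoint)
  ultimately show ?thesis using card_U by simp
qed

lemma block_iff_position:
  assumes i: "i < N" and y: "y \<in> E"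
  shows "y \<in> Fs i \<longleftrightarrow> position E y \<le> s \<or>
    (s + i * (M - s) < position E y \<and> position E y \<le> s + Suc i * (M - s))"
proof -
  have root: "position E y \<le> s" if "y \<in> R"
    unfolding position_def
    using card_mono[OF finite_root lower_root[OF that]] card_root by simp
  obtain a where a: "a < N" "y \<in> Fs a" using y union_blocks by auto
  have "a = i" if "y \<notin> R" "s + i * (M - s) < position E y" "position E y \<le> s + Suc i * (M - s)"
  proof -
    have "s + a * (M - s) < position E y" "position E y \<le> s + Suc a * (M - s)"
      using position_block[OF a(1)] a(2) \<open>y \<notin> R\<close> by auto
    then have "a * (M - s) < Suc i * (M - s)" "i * (M - s) < Suc a * (M - s)"
      using that by linarith+
    then show "a = i" by (meson less_antisym mult_less_cancel2 not_less_eq)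
  qed
  moreover have "s < position E y" if "y \<notin> R"
    using position_block[OF a(1)] a(2) that by force
  ultimately show ?thesis
    using a root position_block[OF i] root_subset[OF i] by (metis Diff_iff not_le subsetD)
qed

lemma root_iff_position:
  assumes i: "i < N" and y: "y \<in> Fs i"
  shows "y \<in> R \<longleftrightarrow> position (Fs i) y \<le> s"
proof
  assume "y \<in> R"
  then have "Fs i \<inter> {..y} \<subseteq> R" using lower_root i union_blocks by blast
  then show "position (Fs i) y \<le> s"
    unfolding position_def using card_mono[OF finite_root] card_root by blast
next
  assume pos: "position (Fs i) y \<le> s"
  show "y \<in> R"
  proof (rule ccontr)
    assume "y \<notin> R"
    then have "insert y R \<subseteq> Fs i \<inter> {..y}"
      using y root_subset[OF i] root_less_block[OF i] unfolding set_less_def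
      by (auto intro: less_imp_le)
    then have "Suc s \<le> position (Fs i) y"
      unfolding position_def using finite_block[OF i] finite_root card_root \<open>y \<notin> R\<close>
      by (metis card_insert_disjoint card_mono finite_Int)
    then show False using pos by simp
  qed
qed

lemma incr_bij_root_iff:
  assumes "i < N" "j < N" "incr_bij (Fs i) (Fs j) \<phi>" "x \<in> Fs i"
  shows "\<phi> x \<in> R \<longleftrightarrow> x \<in> R"
proof -
  have "\<phi> x \<in> Fs j" using assms(3,4) unfolding incr_bij_def bij_betw_def by blast
  then show ?thesis
    using root_iff_position assms incr_bij_position[OF assms(3,4)] by simp
qed

end

text \<open>The block of a point is determined by its position in the union, which increasing
  bijections preserve.\<close>

lemma incr_bij_blocks:
  assumes "ordered_delta_system Es N M s R E" "ordered_delta_system Fs N M s R' F"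
    and \<phi>: "incr_bij E F \<phi>" and i: "i < N"
  shows "incr_bij (Es i) (Fs i) \<phi>"
proof -
  interpret D: ordered_delta_system Es N M s R E by fact
  interpret D': ordered_delta_system Fs N M s R' F by fact
  have bij: "bij_betw \<phi> E F" and mono: "strict_mono_on E \<phi>"
    using \<phi> unfolding incr_bij_def by auto
  have sub: "Es i \<subseteq> E" using D.union_blocks i by auto
  have "\<phi> ` Es i \<subseteq> Fs i"
  proof
    fix w assume "w \<in> \<phi> ` Es i"
    then obtain y where y: "y \<in> Es i" "w = \<phi> y" by blast
    then have "w \<in> F" "position F w = position E y"
      using sub bij incr_bij_position[OF \<phi>] by (auto simp: bij_betw_def)
    then show "w \<in> Fs i"
      using D.block_iff_position[OF i] D'.block_iff_position[OF i] y sub by auto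
  qed
  moreover have inj: "inj_on \<phi> (Es i)" using bij sub by (meson bij_betw_imp_inj_on inj_on_subset)
  moreover have "card (\<phi> ` Es i) = card (Fs i)"
    using card_image[OF inj] D.card_block D'.card_block i by simp
  ultimately have "\<phi> ` Es i = Fs i" using D'.finite_block i by (meson card_subset_eq)
  then show ?thesis
    using inj monotone_on_subset[OF mono sub] unfolding incr_bij_def bij_betw_def by simp
qed

section \<open>Construction schemes\<close>

lemma captures_pairE:
  assumes "captures \<F> n r l F C" "card C = 2"
  obtains k Fs R c0 c1 \<phi> where "l = Suc k" "decomp \<F> n r k F Fs R" "C = {c0, c1}"
    "c0 \<subseteq> Fs 0" "c1 \<subseteq> Fs 1" "c0 - R \<noteq> {}" "incr_bij (Fs 0) (Fs 1) \<phi>" "\<phi> ` c0 = c1"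
proof -
  obtain Fs R c where "1 \<le> l" and decomp: "decomp \<F> n r (l - 1) F Fs R" and C: "C = c ` {..<2}"
    and c: "\<forall>i<2. c i \<subseteq> Fs i \<and> c i - R \<noteq> {} \<and> (\<exists>\<phi>. incr_bij (Fs 0) (Fs i) \<phi> \<and> \<phi> ` c 0 = c i)"
    using assms unfolding captures_def by metis
  moreover have "{..<2::nat} = {0, 1}" by auto
  then have "c ` {..<2} = {c 0, c 1}" by simp
  moreover obtain \<phi> where "incr_bij (Fs 0) (Fs 1) \<phi>" "\<phi> ` c 0 = c 1"
    using c[rule_format, of 1] by auto
  ultimately show ?thesis using that[of "l - 1"] c[rule_format, of 0] c[rule_format, of 1] by auto
qed

locale scheme =
  fixes \<F> :: "'a::linorder set set" and m n r :: "nat \<Rightarrow> nat"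
  assumes type: "is_type m n r" and is_scheme: "construction_scheme \<F> m n r"
    and infinite_carrier: "infinite (UNIV :: 'a set)"
begin

lemma finite_member: "F \<in> \<F> \<Longrightarrow> finite F"
  using is_scheme unfolding construction_scheme_def by blast

lemma finite_level: "F \<in> level \<F> k \<Longrightarrow> finite F"
  using finite_member unfolding level_def by blast

lemma card_level: "F \<in> level \<F> k \<Longrightarrow> card F = m k"
  using is_scheme unfolding construction_scheme_def by blast

lemma level_inter_initial_seg: "E \<in> level \<F> k \<Longrightarrow> F \<in> level \<F> k \<Longrightarrow> initial_seg (E \<inter> F) E"
  using is_scheme unfolding construction_scheme_def by blast

lemma decomp_exists: "F \<in> level \<F> (Suc k) \<Longrightarrow> \<exists>Fs R. decomp \<F> n r k F Fs R"
  using is_scheme unfolding construction_scheme_def by blast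

lemma decomp_level: "decomp \<F> n r k F Fs R \<Longrightarrow> i < n (Suc k) \<Longrightarrow> Fs i \<in> level \<F> k"
  unfolding decomp_def by blast

lemma decomp_delta_system:
  assumes "decomp \<F> n r k F Fs R"
  shows "ordered_delta_system Fs (n (Suc k)) (m k) (r (Suc k)) R F"
proof -
  have "2 \<le> n (Suc k)" "r (Suc k) < m k" using type unfolding is_type_def by auto
  with assms show ?thesis
    unfolding decomp_def
    by unfold_locales (auto intro: finite_level card_level)
qed

lemma strict_mono_m: "strict_mono m"
  unfolding strict_mono_Suc_iff
proof
  fix k
  have "2 \<le> n (Suc k)" "r (Suc k) < m k" "m (Suc k) = r (Suc k) + (m k - r (Suc k)) * n (Suc k)"
    using type unfolding is_type_def by auto
  moreover have "(m k - r (Suc k)) * 2 \<le> (m k - r (Suc k)) * n (Suc k)"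
    using calculation(1) by (rule mult_le_mono2)
  ultimately show "m k < m (Suc k)" by linarith
qed

lemma level_cover:
  assumes "F \<in> level \<F> k" "j \<le> k" "x \<in> F"
  shows "\<exists>H\<in>level \<F> j. H \<subseteq> F \<and> x \<in> H"
  using assms
proof (induction k arbitrary: F)
  case (Suc k)
  show ?case
  proof (cases "j = Suc k")
    case False
    obtain Fs R where decomp: "decomp \<F> n r k F Fs R" using decomp_exists Suc.prems(1) by blast
    then obtain i where i: "i < n (Suc k)" "x \<in> Fs i" "Fs i \<subseteq> F"
      using Suc.prems(3) unfolding decomp_def by auto
    have "j \<le> k" using False Suc.prems(2) by simp
    then obtain H where "H \<in> level \<F> j" "H \<subseteq> Fs i" "x \<in> H"
      using Suc.IH[OF decomp_level[OF decomp i(1)] _ i(2)] by blast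
    then show ?thesis using i(3) by blast
  qed (use Suc.prems in auto)
qed auto

lemma finite_subset_level: "finite A \<Longrightarrow> \<exists>k. \<exists>G\<in>level \<F> k. A \<subseteq> G"
  using is_scheme level_exists finite_member unfolding construction_scheme_def by meson

lemma member_level: "\<exists>G\<in>level \<F> k. x \<in> G"
proof -
  obtain B :: "'a set" where B: "finite B" "card B = Suc (m k)"
    using infinite_arbitrarily_large[OF infinite_carrier] by blast
  obtain k' G where G: "G \<in> level \<F> k'" "insert x B \<subseteq> G"
    using finite_subset_level[of "insert x B"] B(1) by blast
  then have "card B \<le> card G" using card_mono[OF finite_level[OF G(1)]] by blast
  then have "card B \<le> m k'" using card_level[OF G(1)] by simp
  then have "m k < m k'" using B(2) by simp
  then have "k \<le> k'" using strict_mono_less[OF strict_mono_m] by simp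
  then show ?thesis using level_cover[OF G(1)] G(2) by blast
qed

lemma level_lower_closed:
  assumes E: "E \<in> level \<F> j" "\<xi> \<in> E" "\<alpha> \<in> E" "\<xi> \<le> \<alpha>"
    and G: "G \<in> level \<F> k" "\<alpha> \<in> G" "j \<le> k"
  shows "\<xi> \<in> G"
proof -
  obtain H where H: "H \<in> level \<F> j" "H \<subseteq> G" "\<alpha> \<in> H" using level_cover G by blast
  have "initial_seg (E \<inter> H) E" using level_inter_initial_seg E(1) H(1) by blast
  then have "\<xi> \<in> H"
    using E H(3) unfolding initial_seg_def by (metis IntD2 IntI order.not_eq_order_implies_strict)
  then show ?thesis using H(2) by blast
qed

lemma cone_eq_level:
  assumes G: "G \<in> level \<F> k" "\<alpha> \<in> G"
  shows "cone \<F> \<alpha> k = G \<inter> {..\<alpha>}"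
proof (intro equalityI subsetI)
  fix \<xi> assume "\<xi> \<in> G \<inter> {..\<alpha>}"
  then have "rho \<F> \<xi> \<alpha> \<le> k" unfolding rho_def using G by (intro Least_le) auto
  then show "\<xi> \<in> cone \<F> \<alpha> k" using \<open>\<xi> \<in> G \<inter> {..\<alpha>}\<close> unfolding cone_def by simp
next
  fix \<xi> assume \<xi>: "\<xi> \<in> cone \<F> \<alpha> k"
  have "\<exists>j. \<exists>E\<in>level \<F> j. {\<xi>, \<alpha>} \<subseteq> E" using finite_subset_level[of "{\<xi>, \<alpha>}"] by simp
  from LeastI_ex[OF this] obtain E where "E \<in> level \<F> (rho \<F> \<xi> \<alpha>)" "{\<xi>, \<alpha>} \<subseteq> E"
    unfolding rho_def by blast
  then show "\<xi> \<in> G \<inter> {..\<alpha>}" using level_lower_closed[OF _ _ _ _ G] \<xi> unfolding cone_def by auto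
qed

lemma fseq_eq_position: "G \<in> level \<F> k \<Longrightarrow> \<alpha> \<in> G \<Longrightarrow> fseq \<F> \<alpha> k = position G \<alpha>"
  unfolding fseq_def position_def using cone_eq_level by simp

lemma fseq_le_m: "fseq \<F> \<alpha> k \<le> m k"
  using member_level[of k \<alpha>] fseq_eq_position position_le_card finite_level card_level by metis

lemma common_level_above:
  assumes "E \<in> level \<F> k" "\<alpha> \<in> E" "\<gamma> \<in> E" "k \<le> j"
  shows "\<exists>G\<in>level \<F> j. \<alpha> \<in> G \<and> \<gamma> \<in> G"
proof -
  obtain G where G: "G \<in> level \<F> j" "max \<alpha> \<gamma> \<in> G" using member_level by blast
  have "max \<alpha> \<gamma> \<in> E" using assms(2,3) by (simp add: max_def)
  then have "\<alpha> \<in> G" "\<gamma> \<in> G"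
    using level_lower_closed[OF assms(1) _ _ _ G assms(4)] assms(2,3) by simp_all
  then show ?thesis using G(1) by blast
qed

lemma fseq_mono_level:
  assumes "E \<in> level \<F> k" "\<alpha> \<in> E" "\<gamma> \<in> E" "\<alpha> \<le> \<gamma>" "k \<le> j"
  shows "fseq \<F> \<alpha> j \<le> fseq \<F> \<gamma> j"
  using common_level_above[OF assms(1-3,5)] assms(4)
  by (metis fseq_eq_position finite_level position_mono)

lemma fseq_strict_mono_level:
  assumes "E \<in> level \<F> k" "\<alpha> \<in> E" "\<gamma> \<in> E" "\<alpha> < \<gamma>" "k \<le> j"
  shows "fseq \<F> \<alpha> j < fseq \<F> \<gamma> j"
  using common_level_above[OF assms(1-3,5)] assms(4)
  by (metis fseq_eq_position finite_level position_strict_mono)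

lemma fseq_le_imp_le:
  assumes "fseq \<F> \<alpha> \<le> fseq \<F> \<gamma>"
  shows "\<alpha> \<le> \<gamma>"
proof (rule ccontr)
  assume "\<not> \<alpha> \<le> \<gamma>"
  obtain k G where "G \<in> level \<F> k" "{\<gamma>, \<alpha>} \<subseteq> G" using finite_subset_level[of "{\<gamma>, \<alpha>}"] by auto
  then have "fseq \<F> \<gamma> k < fseq \<F> \<alpha> k"
    using fseq_strict_mono_level \<open>\<not> \<alpha> \<le> \<gamma>\<close> by (simp add: not_le)
  then show False using assms by (simp add: le_fun_def not_le[symmetric])
qed

lemma inj_fseq: "inj (fseq \<F>)"
  by (rule injI) (metis fseq_le_imp_le order.antisym order.refl)

lemma fseq_directed: "\<exists>\<gamma>. fseq \<F> \<alpha> \<le> fseq \<F> \<gamma> \<and> fseq \<F> \<beta> \<le> fseq \<F> \<gamma>"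
proof -
  obtain k E where E: "E \<in> level \<F> k" "{\<alpha>, \<beta>} \<subseteq> E" using finite_subset_level[of "{\<alpha>, \<beta>}"] by auto
  define \<gamma> where "\<gamma> = Max E"
  have \<gamma>: "\<gamma> \<in> E" "\<forall>x\<in>E. x \<le> \<gamma>"
    using finite_level[OF E(1)] E(2) unfolding \<gamma>_def by (auto intro: Max_in)
  have top: "fseq \<F> \<gamma> j = m j" if j: "j \<le> k" for j
  proof -
    obtain H where H: "H \<in> level \<F> j" "H \<subseteq> E" "\<gamma> \<in> H" using level_cover[OF E(1) j \<gamma>(1)] by blast
    then have "H \<inter> {..\<gamma>} = H" using \<gamma>(2) by auto
    then show ?thesis
      using fseq_eq_position[OF H(1,3)] card_level[OF H(1)] unfolding position_def by simp
  qed
  have "fseq \<F> x j \<le> fseq \<F> \<gamma> j" if "x \<in> E" for x j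
    using top fseq_le_m fseq_mono_level[OF E(1) that \<gamma>(1)] \<gamma>(2) that by (cases "j \<le> k") auto
  then show ?thesis using E(2) by (auto simp: le_fun_def)
qed

lemma fseq_incr_bij_same_level:
  assumes "E \<in> level \<F> k" "G \<in> level \<F> k" "incr_bij E G \<phi>" "x \<in> E"
  shows "fseq \<F> (\<phi> x) k = fseq \<F> x k"
proof -
  have "\<phi> x \<in> G" using assms(3,4) unfolding incr_bij_def bij_betw_def by blast
  then show ?thesis
    using fseq_eq_position assms incr_bij_position[OF assms(3,4)] by simp
qed

lemma fseq_incr_bij:
  assumes "E \<in> level \<F> k" "G \<in> level \<F> k" "incr_bij E G \<phi>" "x \<in> E" "j \<le> k"
  shows "fseq \<F> (\<phi> x) j = fseq \<F> x j"
  using assms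
proof (induction k arbitrary: E G \<phi> x)
  case (Suc k)
  show ?case
  proof (cases "j = Suc k")
    case False
    obtain Es R where dE: "decomp \<F> n r k E Es R" using decomp_exists Suc.prems(1) by blast
    obtain Gs R' where dG: "decomp \<F> n r k G Gs R'" using decomp_exists Suc.prems(2) by blast
    obtain i where i: "i < n (Suc k)" "x \<in> Es i" using dE Suc.prems(4) unfolding decomp_def by auto
    have "incr_bij (Es i) (Gs i) \<phi>"
      using incr_bij_blocks[OF decomp_delta_system[OF dE] decomp_delta_system[OF dG]
          Suc.prems(3) i(1)] .
    then show ?thesis
      using Suc.IH[OF decomp_level[OF dE i(1)] decomp_level[OF dG i(1)] _ i(2)] False Suc.prems(5)
      by simp
  qed (use Suc.prems fseq_incr_bij_same_level in simp)
qed (use fseq_incr_bij_same_level in simp)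

lemma fseq_le_block_copy:
  assumes F: "F \<in> level \<F> (Suc k)" and decomp: "decomp \<F> n r k F Fs R"
    and \<phi>: "incr_bij (Fs 0) (Fs 1) \<phi>" and \<gamma>: "\<gamma> \<in> Fs 0 - R"
  shows "fseq \<F> \<gamma> \<le> fseq \<F> (\<phi> \<gamma>)"
proof (rule le_funI)
  interpret D: ordered_delta_system Fs "n (Suc k)" "m k" "r (Suc k)" R F
    using decomp_delta_system[OF decomp] .
  have N: "0 < n (Suc k)" "1 < n (Suc k)" using D.two_le_N by auto
  have "\<phi> \<gamma> \<in> Fs 1" using \<phi> \<gamma> unfolding incr_bij_def bij_betw_def by blast
  then have copy: "\<phi> \<gamma> \<in> Fs 1 - R" using D.incr_bij_root_iff[OF N \<phi>] \<gamma> by blast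
  fix j
  show "fseq \<F> \<gamma> j \<le> fseq \<F> (\<phi> \<gamma>) j"
  proof (cases "j \<le> k")
    case True
    then show ?thesis
      using fseq_incr_bij[OF decomp_level[OF decomp N(1)] decomp_level[OF decomp N(2)] \<phi>] \<gamma> by simp
  next
    case False
    have "\<gamma> < \<phi> \<gamma>" using D.block_less[OF _ N(2)] \<gamma> copy unfolding set_less_def by simp
    moreover have "\<gamma> \<in> F" "\<phi> \<gamma> \<in> F" using \<gamma> copy D.union_blocks N by auto
    ultimately show ?thesis using fseq_mono_level[OF F] False by simp
  qed
qed

definition lower_set :: "'a set \<Rightarrow> 'a \<Rightarrow> 'a set" where
  "lower_set \<Gamma> \<delta> = {\<gamma>\<in>\<Gamma>. fseq \<F> \<gamma> \<le> fseq \<F> \<delta>}"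

lemma Max_lower_set: "\<delta> \<in> \<Gamma> \<Longrightarrow> finite (lower_set \<Gamma> \<delta>) \<Longrightarrow> Max (lower_set \<Gamma> \<delta>) = \<delta>"
  by (rule Max_eqI) (auto simp: lower_set_def intro: fseq_le_imp_le)

lemma lower_sets_not_captured:
  assumes "C \<subseteq> lower_set \<Gamma> ` \<Gamma>" "card C = 2"
  shows "\<not> captures \<F> n r l F C"
proof
  assume cap: "captures \<F> n r l F C"
  then have F: "F \<in> level \<F> l" unfolding captures_def by blast
  obtain k Fs R c0 c1 \<phi> where l: "l = Suc k" and decomp: "decomp \<F> n r k F Fs R"
    and C: "C = {c0, c1}" and c: "c0 \<subseteq> Fs 0" "c1 \<subseteq> Fs 1" "c0 - R \<noteq> {}"
    and \<phi>: "incr_bij (Fs 0) (Fs 1) \<phi>" "\<phi> ` c0 = c1"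
    using captures_pairE[OF cap assms(2)] .
  interpret D: ordered_delta_system Fs "n (Suc k)" "m k" "r (Suc k)" R F
    using decomp_delta_system[OF decomp] .
  have N: "0 < n (Suc k)" "1 < n (Suc k)" using D.two_le_N by auto
  obtain \<gamma> \<delta> where \<gamma>: "\<gamma> \<in> \<Gamma>" "c0 = lower_set \<Gamma> \<gamma>" and \<delta>: "\<delta> \<in> \<Gamma>" "c1 = lower_set \<Gamma> \<delta>"
    using assms(1) C by auto
  have finite: "finite c0" "finite c1" using c D.finite_block N finite_subset by blast+
  have "\<gamma> \<in> c0" using \<gamma> unfolding lower_set_def by simp
  then have "c0 \<noteq> {}" "\<gamma> \<in> Fs 0" using c(1) by auto
  moreover have "\<gamma> \<notin> R"
  proof
    assume "\<gamma> \<in> R"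
    obtain z where z: "z \<in> c0" "z \<notin> R" using c(3) by blast
    then have "\<gamma> < z" using D.root_less_block[OF N(1)] c(1) \<open>\<gamma> \<in> R\<close> unfolding set_less_def by blast
    moreover have "z \<le> \<gamma>" using z(1) \<gamma>(2) fseq_le_imp_le unfolding lower_set_def by blast
    ultimately show False by simp
  qed
  moreover have "\<delta> = \<phi> \<gamma>"
    using Max_lower_set \<gamma> \<delta> finite incr_bij_Max[OF \<phi>(1) c(1) finite(1) \<open>c0 \<noteq> {}\<close>] \<phi>(2) by metis
  ultimately have "fseq \<F> \<gamma> \<le> fseq \<F> \<delta>" using fseq_le_block_copy[OF _ decomp \<phi>(1)] F l by blast
  then have "\<gamma> \<in> Fs 0 \<inter> Fs 1" using \<gamma>(1) \<delta>(2) c(2) \<open>\<gamma> \<in> Fs 0\<close> unfolding lower_set_def by blast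
  then show False using D.block_inter[OF N zero_neq_one] \<open>\<gamma> \<notin> R\<close> by blast
qed

lemma two_capturing_infinite_lower_set:
  assumes "two_capturing \<F> n r" "uncountable \<Gamma>"
  shows "\<exists>\<delta>\<in>\<Gamma>. infinite (lower_set \<Gamma> \<delta>)"
proof (rule ccontr)
  assume "\<not> ?thesis"
  then have finite: "\<forall>\<delta>\<in>\<Gamma>. finite (lower_set \<Gamma> \<delta>)" by blast
  then have "inj_on (lower_set \<Gamma>) \<Gamma>" using Max_lower_set by (metis inj_onI)
  then have "uncountable (lower_set \<Gamma> ` \<Gamma>)" using assms(2) countable_image_inj_on by blast
  moreover have "lower_set \<Gamma> ` \<Gamma> \<subseteq> {A. finite A}" using finite by auto
  ultimately obtain C l F where "C \<subseteq> lower_set \<Gamma> ` \<Gamma>" "card C = 2" "captures \<F> n r l F C"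
    using assms(1)[unfolded two_capturing_def, rule_format, of "lower_set \<Gamma> ` \<Gamma>" 0] by blast
  then show False using lower_sets_not_captured by blast
qed

lemma countable_below_fseq:
  assumes "\<And>x::'a. countable {y. y < x}"
  shows "countable {h\<in>range (fseq \<F>). h \<le> fseq \<F> \<delta>}"
proof -
  have "h \<in> fseq \<F> ` insert \<delta> {y. y < \<delta>}" if h: "h \<in> range (fseq \<F>)" "h \<le> fseq \<F> \<delta>" for h
  proof -
    obtain \<alpha> where "h = fseq \<F> \<alpha>" using h(1) by blast
    moreover have "\<alpha> \<le> \<delta>" using fseq_le_imp_le h(2) calculation by simp
    then have "\<alpha> \<in> insert \<delta> {y. y < \<delta>}" by (auto simp: order.order_iff_strict)
    ultimately show ?thesis by blast
  qed
  then have "{h\<in>range (fseq \<F>). h \<le> fseq \<F> \<delta>} \<subseteq> fseq \<F> ` insert \<delta> {y. y < \<delta>}" by blast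
  moreover have "countable (fseq \<F> ` insert \<delta> {y. y < \<delta>})" using assms by simp
  ultimately show ?thesis by (rule countable_subset)
qed

lemma uncountable_subset_fseq_unbounded:
  assumes "\<And>x::'a. countable {y. y < x}" "S \<subseteq> range (fseq \<F>)" "uncountable S"
  shows "\<exists>Q\<subseteq>S. countable Q \<and> (\<forall>b\<in>range (fseq \<F>). \<exists>q\<in>Q. \<not> q \<le> b)"
proof -
  have "(\<lambda>f. f j) ` S \<subseteq> {..m j}" for j using assms(2) fseq_le_m by auto
  then have "finite ((\<lambda>f. f j) ` S)" for j using finite_subset by blast
  moreover have "S \<noteq> {}" using assms(3) by auto
  ultimately obtain Q where Q: "Q \<subseteq> S" "countable Q" "\<forall>b. (\<forall>q\<in>Q. q \<le> b) \<longrightarrow> (\<forall>f\<in>S. f \<le> b)"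
    using countable_subset_same_upper_bounds[of S] by blast
  have "\<exists>q\<in>Q. \<not> q \<le> fseq \<F> \<delta>" for \<delta>
  proof (rule ccontr)
    assume "\<not> ?thesis"
    then have "\<forall>q\<in>Q. q \<le> fseq \<F> \<delta>" by blast
    then have "\<forall>f\<in>S. f \<le> fseq \<F> \<delta>" by (rule mp[OF spec[OF Q(3)]])
    then have "S \<subseteq> {h\<in>range (fseq \<F>). h \<le> fseq \<F> \<delta>}" using assms(2) by auto
    then have "countable S" by (rule countable_subset[OF _ countable_below_fseq[OF assms(1)]])
    then show False using assms(3) by contradiction
  qed
  then show ?thesis using Q(1,2) by blast
qed

lemma not_tukey_le_fseq_nat_prod:
  assumes "uncountable (UNIV :: 'a set)" "\<And>x::'a. countable {y. y < x}"
  shows "\<not> tukey_le (range (fseq \<F>)) (\<le>) (UNIV :: (nat \<times> 'a) set) prod_le"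
proof (rule not_tukey_le_nat_prod)
  show "\<exists>b. \<forall>q\<in>Q. q \<le> b" if "countable Q" for Q :: "'a set"
    using countable_bounded[OF assms that] .
  show "uncountable (range (fseq \<F>))" using assms(1) by (simp add: countable_image_inj_eq[OF inj_fseq])
  show "\<exists>Q\<subseteq>S. countable Q \<and> (\<forall>b\<in>range (fseq \<F>). \<exists>q\<in>Q. \<not> q \<le> b)"
    if "S \<subseteq> range (fseq \<F>)" "uncountable S" for S
    using uncountable_subset_fseq_unbounded[OF assms(2) that] .
qed

lemma not_tukey_le_finite_subsets_fseq:
  assumes "uncountable (UNIV :: 'a set)" "two_capturing \<F> n r"
  shows "\<not> tukey_le {A :: 'a set. finite A} (\<subseteq>) (range (fseq \<F>)) (\<le>)"
proof
  assume "tukey_le {A :: 'a set. finite A} (\<subseteq>) (range (fseq \<F>)) (\<le>)"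
  from tukey_le_finite_subsets_locally_finite[OF assms(1) this order_refl]
  obtain \<Gamma> where \<Gamma>: "\<Gamma> \<subseteq> range (fseq \<F>)" "uncountable \<Gamma>" "\<forall>g\<in>\<Gamma>. finite {h\<in>\<Gamma>. h \<le> g}"
    by blast
  let ?I = "fseq \<F> -` \<Gamma>"
  have "\<Gamma> = fseq \<F> ` ?I" using \<Gamma>(1) by auto
  then have "uncountable ?I" using \<Gamma>(2) countable_image[of ?I "fseq \<F>"] by argo
  then obtain \<delta> where \<delta>: "\<delta> \<in> ?I" "infinite (lower_set ?I \<delta>)"
    using two_capturing_infinite_lower_set[OF assms(2)] by blast
  have "lower_set ?I \<delta> = fseq \<F> -` {h\<in>\<Gamma>. h \<le> fseq \<F> \<delta>}" unfolding lower_set_def by auto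
  then have "infinite {h\<in>\<Gamma>. h \<le> fseq \<F> \<delta>}" using \<delta>(2) finite_vimageI[OF _ inj_fseq] by metis
  then show False using \<delta>(1) \<Gamma>(3) by blast
qed

lemma directed_po_fseq: "directed_po (range (fseq \<F>)) (\<le>)"
  unfolding directed_po_def using fseq_directed by fastforce

end

theorem mainTheorem11:
  fixes \<F> :: "'a::wellorder set set" and m n r :: "nat \<Rightarrow> nat"
  assumes omega1: "uncountable (UNIV :: 'a set)" "\<forall>x::'a. countable {y. y < x}"
    and tau: "is_type m n r"
    and scheme: "construction_scheme \<F> m n r"
    and cap: "two_capturing \<F> n r"
  shows "directed_po (range (fseq \<F>)) (\<le>) \<and>
         (\<exists>g. bij_betw g (UNIV :: 'a set) (range (fseq \<F>))) \<and>
         \<not> tukey_eq (range (fseq \<F>)) (\<le>) {()} (=) \<and>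
         \<not> tukey_eq (range (fseq \<F>)) (\<le>) (UNIV :: nat set) (\<le>) \<and>
         \<not> tukey_eq (range (fseq \<F>)) (\<le>) (UNIV :: 'a set) (\<le>) \<and>
         \<not> tukey_eq (range (fseq \<F>)) (\<le>) (UNIV :: (nat \<times> 'a) set) prod_le \<and>
         \<not> tukey_eq (range (fseq \<F>)) (\<le>) {A :: 'a set. finite A} (\<subseteq>)"
proof -
  interpret scheme \<F> m n r
    using tau scheme omega1(1) countable_finite by unfold_locales blast+
  let ?B = "range (fseq \<F>)"
  have not_prod: "\<not> tukey_le ?B (\<le>) (UNIV :: (nat \<times> 'a) set) prod_le"
    using not_tukey_le_fseq_nat_prod[OF omega1(1) omega1(2)[rule_format]] .
  have "\<not> tukey_le ?B (\<le>) {()} (=)"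
    using not_prod tukey_le_trans[OF _ tukey_le_singleton[of "UNIV :: (nat \<times> 'a) set" "()"]]
    by blast
  moreover have "\<not> tukey_le ?B (\<le>) (UNIV :: nat set) (\<le>)"
    using not_prod tukey_le_trans[OF _ tukey_le_fst_prod] by blast
  moreover have "\<not> tukey_le ?B (\<le>) (UNIV :: 'a set) (\<le>)"
    using not_prod tukey_le_trans[OF _ tukey_le_snd_prod] by blast
  moreover have "bij_betw (fseq \<F>) UNIV ?B" using inj_fseq by (simp add: bij_betw_def)
  ultimately show ?thesis
    unfolding tukey_eq_def
    using directed_po_fseq not_prod not_tukey_le_finite_subsets_fseq[OF omega1(1) cap] by blast
qed

end
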